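(* Let $\alpha\in\mathbb N^n$ and let $\mathcal M$ be a matroid on $[n]$, regarded as a discrete polymatroid whose bases are $(0,1)$-vectors. If $\mathcal M$ satisfies White's conjecture, i.e. its toric ideal $I_{\mathcal M}$ is generated by quadratic binomials corresponding to double swaps, then $\mathcal M^\alpha$ satisfies White's conjecture, i.e. $I_{\mathcal M^\alpha}$ is generated by quadratic binomials corresponding to double swaps.
   Context: $K$ is a field, $\mathbb N$ the positive integers. For a discrete polymatroid (in particular a matroid) $P\subset\mathbb Z^n_+$ with set of bases $\mathcal B_P$ (the $\preceq$-maximal elements), $S_P=K[y_{\mathbf u}:\mathbf u\in\mathcal B_P]$ and $I_P$ is the kernel of the $K$-algebra map $S_P\to K[x_1,\ldots,x_n]$, $y_{\mathbf u}\mapsto x_1^{\mathbf u(1)}\cdots x_n^{\mathbf u(n)}$. A pair of bases $(\mathbf v_1,\mathbf v_2)$ is obtained from $(\mathbf u_1,\mathbf u_2)$ by a double swap if $\mathbf v_1=\mathbf u_1+\epsilon_j-\epsilon_i$, $\mathbf v_2=\mathbf u_2+\epsilon_i-\epsilon_j$ with $\mathbf u_1(i)>\mathbf u_2(i)$ and $\mathbf u_2(j)>\mathbf u_1(j)$; the corresponding binomial is $y_{\mathbf u_1}y_{\mathbf u_2}-y_{\mathbf v_1}y_{\mathbf v_2}$. For $\alpha=(k_1,\ldots,k_n)$, index coordinates of $\mathbb Z^{|\alpha|}$ by pairs $(i,j)$, $1\le j\le k_i$, let $\pi_0(\mathbf w)(i)=\sum_j\mathbf w(i,j)$, and $\mathbf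 u^\alpha=\{\mathbf w\in\mathbb Z^{|\alpha|}_+:\pi_0(\mathbf w)=\mathbf u\}$. $P^\alpha$ is the discrete polymatroid with set of bases $\bigcup_{\mathbf u\in\mathcal B_P}\mathbf u^\alpha$ (for a matroid these bases are again $(0,1)$-vectors, so $\mathcal M^\alpha$ is a matroid). *)

theory Defs
  imports "HOL-Library.Poly_Mapping"
begin

text \<open>Vectors in Z_+^E are functions 'a => nat vanishing outside the ground set E.\<close>

type_synonym ('v, 'k) mpoly = "('v \<Rightarrow>\<^sub>0 nat) \<Rightarrow>\<^sub>0 'k"

definition mvars :: "('v, 'k::zero) mpoly \<Rightarrow> 'v set" where
  "mvars p = \<Union> (Poly_Mapping.keys ` Poly_Mapping.keys p)"

definition Yvar :: "'v \<Rightarrow> ('v, 'k::{zero,one}) mpoly" where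
  "Yvar v = Poly_Mapping.single (Poly_Mapping.single v 1) 1"

definition poly_ring :: "'v set \<Rightarrow> ('v, 'k::zero) mpoly set" where
  "poly_ring V = {p. mvars p \<subseteq> V}"

definition gen_ideal :: "'v set \<Rightarrow> ('v, 'k::comm_ring_1) mpoly set \<Rightarrow> ('v, 'k) mpoly set" where
  "gen_ideal V G = {(\<Sum>g\<in>F. c g * g) | F c. finite F \<and> F \<subseteq> G \<and> (\<forall>g\<in>F. c g \<in> poly_ring V)}"

text \<open>Discrete polymatroid bases: image exponent of the monomial prod y_u^{m(u)}
  under y_u |-> x^u is sum_u m(u) u.\<close>
definition mono_image :: "(('a \<Rightarrow> nat) \<Rightarrow>\<^sub>0 nat) \<Rightarrow> ('a \<Rightarrow> nat)" where
  "mono_image m = (\<lambda>x. \<Sum>u\<in>Poly_Mapping.keys m. Poly_Mapping.lookup m u * u x)"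

text \<open>Coefficient function of the image in K[x] of p under the K-algebra map
  y_u |-> x^u (linear extension of the monomial map).\<close>
definition toric_image :: "('a \<Rightarrow> nat, 'k::comm_ring_1) mpoly \<Rightarrow> ('a \<Rightarrow> nat) \<Rightarrow> 'k" where
  "toric_image p = (\<lambda>e. \<Sum>m\<in>{m\<in>Poly_Mapping.keys p. mono_image m = e}. Poly_Mapping.lookup p m)"

definition toric_ideal :: "('a \<Rightarrow> nat) set \<Rightarrow> ('a \<Rightarrow> nat, 'k::comm_ring_1) mpoly set" where
  "toric_ideal B = {p \<in> poly_ring B. toric_image p = (\<lambda>_. 0)}"

definition double_swap_binomials :: "('a \<Rightarrow> nat) set \<Rightarrow> ('a \<Rightarrow> nat, 'k::comm_ring_1) mpoly set" where
  "double_swap_binomials B =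
     {Yvar u1 * Yvar u2 - Yvar v1 * Yvar v2 | u1 u2 v1 v2 i j.
        u1 \<in> B \<and> u2 \<in> B \<and> v1 \<in> B \<and> v2 \<in> B \<and>
        u1 i > u2 i \<and> u2 j > u1 j \<and>
        v1 = (\<lambda>x. if x = j then u1 x + 1 else if x = i then u1 x - 1 else u1 x) \<and>
        v2 = (\<lambda>x. if x = i then u2 x + 1 else if x = j then u2 x - 1 else u2 x)}"

definition white_property :: "'k::field itself \<Rightarrow> ('a \<Rightarrow> nat) set \<Rightarrow> bool" where
  "white_property (_ :: 'k itself) B \<longleftrightarrow>
     (toric_ideal B :: ('a \<Rightarrow> nat, 'k) mpoly set) = gen_ideal B (double_swap_binomials B)"

text \<open>Set of bases of a matroid on ground set E, regarded as a discrete polymatroid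
  whose bases are (0,1)-vectors (basis exchange in polymatroid form).\<close>
definition matroid_bases :: "'a set \<Rightarrow> ('a \<Rightarrow> nat) set \<Rightarrow> bool" where
  "matroid_bases E B \<longleftrightarrow>
     B \<noteq> {} \<and>
     (\<forall>u\<in>B. (\<forall>x. x \<notin> E \<longrightarrow> u x = 0) \<and> (\<forall>x\<in>E. u x \<le> 1)) \<and>
     (\<forall>u\<in>B. \<forall>v\<in>B. \<forall>i. u i > v i \<longrightarrow>
        (\<exists>j. v j > u j \<and> (\<lambda>x. if x = j then u x + 1 else if x = i then u x - 1 else u x) \<in> B))"

text \<open>Ground set of P^alpha, alpha = (k_0,...,k_{n-1}): pairs (i,j), i<n, 1<=j<=k_i.\<close>
definition alpha_ground :: "nat \<Rightarrow> (nat \<Rightarrow> nat) \<Rightarrow> (nat \<times> nat) set" where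
  "alpha_ground n k = {(i, j). i < n \<and> 1 \<le> j \<and> j \<le> k i}"

definition pi0 :: "(nat \<Rightarrow> nat) \<Rightarrow> (nat \<times> nat \<Rightarrow> nat) \<Rightarrow> nat \<Rightarrow> nat" where
  "pi0 k w = (\<lambda>i. \<Sum>j\<in>{1..k i}. w (i, j))"

text \<open>Set of bases of P^alpha: union of u^alpha over bases u of P.\<close>
definition alpha_bases :: "nat \<Rightarrow> (nat \<Rightarrow> nat) \<Rightarrow> (nat \<Rightarrow> nat) set \<Rightarrow> (nat \<times> nat \<Rightarrow> nat) set" where
  "alpha_bases n k B = {w. (\<forall>x. x \<notin> alpha_ground n k \<longrightarrow> w x = 0) \<and> pi0 k w \<in> B}"

end

(*
  By the fundamental theorem of Markov bases, White's property for a set of bases V says that any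
  two monomials in the variables y_u, u in V, with the same image under the toric map are joined by
  a chain of double swaps.  When B consists of 0/1 vectors, every basis of P^alpha is a 0/1 vector
  each of whose rows is zero or a unit vector.  Given two monomials over P^alpha with the same
  image, their projections along pi0 have the same image and are therefore joined by double swaps
  of B; each of these lifts to a double swap of P^alpha by moving the units of the two rows
  involved.  This reaches a monomial with the same projection and the same image as the target,
  and two such monomials are joined by double swaps inside single rows, which do not change the
  projection.
*)

theory Submission
  imports Defs
begin

abbreviation (input) keys :: "('a \<Rightarrow>\<^sub>0 'b::zero) \<Rightarrow> 'a set"
  where "keys \<equiv> Poly_Mapping.keys"
abbreviation (input) lookup :: "('a \<Rightarrow>\<^sub>0 'b::zero) \<Rightarrow> 'a \<Rightarrow> 'b"
  where "lookup \<equiv> Poly_Mapping.lookup"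
abbreviation (input) single :: "'a \<Rightarrow> 'b \<Rightarrow> 'a \<Rightarrow>\<^sub>0 'b::zero"
  where "single \<equiv> Poly_Mapping.single"

lemma mvars_add: "mvars (p + q) \<subseteq> mvars p \<union> mvars q"
  unfolding mvars_def using keys_add[of p q] by blast

lemma mvars_mult: "mvars ((p::('v, 'k::comm_ring_1) mpoly) * q) \<subseteq> mvars p \<union> mvars q"
proof
  fix v assume "v \<in> mvars (p * q)"
  then obtain m where m: "m \<in> keys (p * q)" "v \<in> keys m" unfolding mvars_def by blast
  then obtain a b where "a \<in> keys p" "b \<in> keys q" "m = a + b" using keys_mult by blast
  then show "v \<in> mvars p \<union> mvars q" using m(2) keys_add[of a b] unfolding mvars_def by blast
qed

lemma poly_ring_add: "p \<in> poly_ring V \<Longrightarrow> q \<in> poly_ring V \<Longrightarrow> p + q \<in> poly_ring V"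
  unfolding poly_ring_def using mvars_add[of p q] by auto

lemma poly_ring_uminus: "(p::('v, 'k::ab_group_add) mpoly) \<in> poly_ring V \<Longrightarrow> - p \<in> poly_ring V"
  unfolding poly_ring_def mvars_def by simp

lemma poly_ring_diff:
  "(p::('v, 'k::ab_group_add) mpoly) \<in> poly_ring V \<Longrightarrow> q \<in> poly_ring V \<Longrightarrow> p - q \<in> poly_ring V"
  using poly_ring_add[of p V "- q"] poly_ring_uminus[of q V] by simp

lemma poly_ring_mult:
  "(p::('v, 'k::comm_ring_1) mpoly) \<in> poly_ring V \<Longrightarrow> q \<in> poly_ring V \<Longrightarrow> p * q \<in> poly_ring V"
  unfolding poly_ring_def using mvars_mult[of p q] by auto

lemma poly_ring_single: "keys m \<subseteq> V \<Longrightarrow> single m c \<in> poly_ring V"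
  unfolding poly_ring_def mvars_def by auto

lemma poly_ring_zero [simp]: "0 \<in> poly_ring V"
  unfolding poly_ring_def mvars_def by simp

lemma poly_ring_sum: "(\<And>i. i \<in> F \<Longrightarrow> f i \<in> poly_ring V) \<Longrightarrow> sum f F \<in> poly_ring V"
  by (induction F rule: infinite_finite_induct) (simp_all add: poly_ring_add)

lemma gen_ideal_zero: "0 \<in> gen_ideal V G"
  unfolding gen_ideal_def by (intro CollectI exI[of _ "{}"]) auto

lemma gen_ideal_generator: "g \<in> G \<Longrightarrow> g \<in> gen_ideal V G"
  unfolding gen_ideal_def
  by (intro CollectI exI[of _ "{g}"] exI[of _ "\<lambda>_. 1"]) (auto simp: poly_ring_def mvars_def)

lemma gen_ideal_add:
  assumes "p \<in> gen_ideal V G" "q \<in> gen_ideal V G"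
  shows "p + q \<in> gen_ideal V G"
proof -
  obtain F c where p: "p = (\<Sum>g\<in>F. c g * g)" "finite F" "F \<subseteq> G" "\<forall>g\<in>F. c g \<in> poly_ring V"
    using assms(1) unfolding gen_ideal_def by blast
  obtain F' c' where q: "q = (\<Sum>g\<in>F'. c' g * g)" "finite F'" "F' \<subseteq> G" "\<forall>g\<in>F'. c' g \<in> poly_ring V"
    using assms(2) unfolding gen_ideal_def by blast
  define d where "d g = (if g \<in> F then c g else 0) + (if g \<in> F' then c' g else 0)" for g
  have "p = (\<Sum>g\<in>F \<union> F'. (if g \<in> F then c g else 0) * g)"
    unfolding p(1) using p(2) q(2) by (intro sum.mono_neutral_cong_left) auto
  moreover have "q = (\<Sum>g\<in>F \<union> F'. (if g \<in> F' then c' g else 0) * g)"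
    unfolding q(1) using p(2) q(2) by (intro sum.mono_neutral_cong_left) auto
  ultimately have "p + q = (\<Sum>g\<in>F \<union> F'. d g * g)"
    by (simp add: d_def distrib_right sum.distrib)
  moreover have "\<forall>g\<in>F \<union> F'. d g \<in> poly_ring V"
    using p(4) q(4) unfolding d_def by (auto intro!: poly_ring_add)
  ultimately show ?thesis
    using p q unfolding gen_ideal_def by (intro CollectI exI[of _ "F \<union> F'"] exI[of _ d]) auto
qed

lemma gen_ideal_mult:
  assumes "p \<in> gen_ideal V G" "r \<in> poly_ring V"
  shows "r * p \<in> gen_ideal V G"
proof -
  obtain F c where p: "p = (\<Sum>g\<in>F. c g * g)" "finite F" "F \<subseteq> G" "\<forall>g\<in>F. c g \<in> poly_ring V"
    using assms(1) unfolding gen_ideal_def by blast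
  have "r * p = (\<Sum>g\<in>F. (r * c g) * g)"
    by (simp add: p(1) sum_distrib_left mult.assoc)
  then show ?thesis
    using p assms(2) unfolding gen_ideal_def
    by (intro CollectI exI[of _ F] exI[of _ "\<lambda>g. r * c g"]) (auto intro: poly_ring_mult)
qed

lemma gen_ideal_uminus:
  assumes "p \<in> gen_ideal V G"
  shows "- p \<in> gen_ideal V G"
proof -
  have "- 1 \<in> poly_ring V"
    by (simp add: poly_ring_def mvars_def)
  from gen_ideal_mult[OF assms this] show ?thesis by simp
qed

lemma gen_ideal_sum: "(\<And>i. i \<in> F \<Longrightarrow> f i \<in> gen_ideal V G) \<Longrightarrow> sum f F \<in> gen_ideal V G"
  by (induction F rule: infinite_finite_induct) (auto intro: gen_ideal_add gen_ideal_zero)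

lemma gen_ideal_subset_poly_ring:
  assumes "G \<subseteq> poly_ring V"
  shows "gen_ideal V G \<subseteq> poly_ring V"
  using assms unfolding gen_ideal_def by (auto intro!: poly_ring_sum poly_ring_mult)

lemma poly_mapping_sum_single: "p = (\<Sum>t\<in>keys p. single t (lookup p t))"
  by (rule poly_mapping_eqI) (simp add: lookup_sum lookup_single when_def in_keys_iff)

definition linear_extension :: "(('v \<Rightarrow>\<^sub>0 nat) \<Rightarrow> 'k::comm_ring_1) \<Rightarrow> ('v, 'k) mpoly \<Rightarrow> 'k" where
  "linear_extension \<phi> p = (\<Sum>t\<in>keys p. lookup p t * \<phi> t)"

lemma linear_extension_superset:
  "finite S \<Longrightarrow> keys p \<subseteq> S \<Longrightarrow> linear_extension \<phi> p = (\<Sum>t\<in>S. lookup p t * \<phi> t)"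
  unfolding linear_extension_def by (rule sum.mono_neutral_left) (auto simp: in_keys_iff)

lemma linear_extension_add:
  "linear_extension \<phi> (p + q) = linear_extension \<phi> p + linear_extension \<phi> q"
  using keys_add[of p q]
  by (simp add: linear_extension_superset[of "keys p \<union> keys q"] lookup_add distrib_right
      sum.distrib)

lemma linear_extension_uminus: "linear_extension \<phi> (- p) = - linear_extension \<phi> p"
  unfolding linear_extension_def by (simp add: sum_negf)

lemma linear_extension_diff:
  "linear_extension \<phi> (p - q) = linear_extension \<phi> p - linear_extension \<phi> q"
  using linear_extension_add[of \<phi> p "- q"] by (simp add: linear_extension_uminus)

lemma linear_extension_single [simp]: "linear_extension \<phi> (single t c) = c * \<phi> t"
  unfolding linear_extension_def by simp

lemma linear_extension_zero [simp]: "linear_extension \<phi> 0 = 0"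
  unfolding linear_extension_def by simp

lemma linear_extension_sum: "linear_extension \<phi> (sum f F) = (\<Sum>i\<in>F. linear_extension \<phi> (f i))"
  by (induction F rule: infinite_finite_induct) (simp_all add: linear_extension_add)

lemma linear_extension_mult_single:
  "linear_extension \<phi> ((c::('v, 'k::comm_ring_1) mpoly) * single a 1) =
    (\<Sum>t\<in>keys c. lookup c t * \<phi> (t + a))"
proof -
  have "c * single a 1 = (\<Sum>t\<in>keys c. single t (lookup c t)) * single a 1"
    by (subst poly_mapping_sum_single) simp
  then show ?thesis by (simp add: sum_distrib_right mult_single linear_extension_sum)
qed

definition binomials :: "('v \<Rightarrow>\<^sub>0 nat) rel \<Rightarrow> ('v, 'k::comm_ring_1) mpoly set" where
  "binomials R = {single a 1 - single b 1 | a b. (a, b) \<in> R}"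

lemma linear_extension_gen_ideal_binomials:
  assumes "\<And>t a b. (a, b) \<in> R \<Longrightarrow> \<phi> (t + a) = \<phi> (t + b)"
    and "p \<in> gen_ideal V (binomials R)"
  shows "linear_extension \<phi> p = 0"
proof -
  obtain F c where p: "p = (\<Sum>g\<in>F. c g * g)" and F: "F \<subseteq> binomials R"
    using assms(2) unfolding gen_ideal_def by blast
  have "linear_extension \<phi> (c g * g) = 0" if "g \<in> F" for g
  proof -
    obtain a b where "g = single a 1 - single b 1" "(a, b) \<in> R"
      using F \<open>g \<in> F\<close> unfolding binomials_def by blast
    then show ?thesis
      by (simp add: right_diff_distrib linear_extension_diff linear_extension_mult_single assms(1))
  qed
  then show ?thesis by (simp add: p linear_extension_sum)
qed

lemma toric_image_linear_extension:
  "toric_image p e = linear_extension (\<lambda>t. of_bool (mono_image t = e)) p"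
  unfolding toric_image_def linear_extension_def
  by (auto simp: sum.inter_filter of_bool_def intro!: sum.cong)

lemma keys_add_nat: "keys ((a :: 'a \<Rightarrow>\<^sub>0 nat) + b) = keys a \<union> keys b"
  by (auto simp: in_keys_iff lookup_add)

lemma monomial_split:
  assumes "w \<in> keys (m :: 'a \<Rightarrow>\<^sub>0 nat)"
  obtains m' where "m = m' + single w 1"
proof
  show "m = (m - single w 1) + single w 1"
    using assms
    by (intro poly_mapping_eqI) (auto simp: lookup_add lookup_minus lookup_single when_def in_keys_iff)
qed

lemma monomial_induct [case_names zero add_var]:
  assumes "P 0" and "\<And>m w. P m \<Longrightarrow> P (m + single w 1)"
  shows "P (m :: 'a \<Rightarrow>\<^sub>0 nat)"
proof (induction "sum (lookup m) (keys m)" arbitrary: m rule: less_induct)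
  case less
  show ?case
  proof (cases "m = 0")
    case False
    then obtain w where "w \<in> keys m" by fastforce
    then obtain m' where m: "m = m' + single w 1" by (rule monomial_split)
    have "sum (lookup m') (keys m') = sum (lookup m') (keys m)"
      using m by (intro sum.mono_neutral_left) (auto simp: keys_add_nat in_keys_iff)
    also have "\<dots> < sum (lookup m) (keys m)"
      using \<open>w \<in> keys m\<close> by (simp add: m lookup_add lookup_single sum.distrib when_def)
    finally have "P m'" by (rule less)
    then show ?thesis using assms(2) m by simp
  qed (use assms(1) in simp)
qed

definition push_monomial :: "('a \<Rightarrow> 'b) \<Rightarrow> ('a \<Rightarrow>\<^sub>0 nat) \<Rightarrow> ('b \<Rightarrow>\<^sub>0 nat)" where
  "push_monomial f m = (\<Sum>w\<in>keys m. single (f w) (lookup m w))"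

lemma push_monomial_add: "push_monomial f (a + b) = push_monomial f a + push_monomial f b"
proof -
  have *: "push_monomial f m = (\<Sum>w\<in>keys a \<union> keys b. single (f w) (lookup m w))"
    if "keys m \<subseteq> keys a \<union> keys b" for m
    unfolding push_monomial_def using that
    by (intro sum.mono_neutral_left) (auto simp: in_keys_iff)
  show ?thesis
    by (simp add: *[of "a + b"] *[of a] *[of b] keys_add_nat lookup_add single_add sum.distrib)
qed

lemma push_monomial_zero [simp]: "push_monomial f 0 = 0"
  unfolding push_monomial_def by simp

lemma push_monomial_single [simp]: "push_monomial f (single w c) = single (f w) c"
  unfolding push_monomial_def by simp

lemma keys_push_monomial: "keys (push_monomial f m) = f ` keys m"
  by (induction m rule: monomial_induct) (simp_all add: push_monomial_add keys_add_nat)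

lemma push_monomial_eq_add_single:
  assumes "push_monomial f m = t + single u 1"
  obtains w m' where "m = m' + single w 1" "f w = u" "push_monomial f m' = t"
proof -
  have "u \<in> keys (push_monomial f m)" using assms by (simp add: keys_add_nat)
  then obtain w where "w \<in> keys m" "f w = u" by (auto simp: keys_push_monomial)
  moreover obtain m' where "m = m' + single w 1" using \<open>w \<in> keys m\<close> by (rule monomial_split)
  moreover have "push_monomial f m' = t"
    using assms calculation by (simp add: push_monomial_add)
  ultimately show ?thesis using that by blast
qed

lemma mono_image_add: "mono_image (a + b) = (\<lambda>x. mono_image a x + mono_image b x)"
proof -
  have *: "mono_image m = (\<lambda>x. \<Sum>u\<in>keys a \<union> keys b. lookup m u * u x)"
    if "keys m \<subseteq> keys a \<union> keys b" for m
    unfolding mono_image_def using that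
    by (intro ext sum.mono_neutral_left) (auto simp: in_keys_iff)
  show ?thesis
    by (simp add: *[of "a + b"] *[of a] *[of b] keys_add_nat lookup_add sum.distrib distrib_right)
qed

lemma mono_image_zero [simp]: "mono_image 0 = (\<lambda>_. 0)"
  unfolding mono_image_def by simp

lemma mono_image_single [simp]: "mono_image (single u c) = (\<lambda>x. c * u x)"
  unfolding mono_image_def by simp

lemma mono_image_nonzero: "mono_image m x \<noteq> 0 \<Longrightarrow> \<exists>u\<in>keys m. u x \<noteq> 0"
  using sum.neutral[of "keys m" "\<lambda>u. lookup m u * u x"] unfolding mono_image_def by auto

definition moves :: "'m::plus rel \<Rightarrow> 'm rel" where
  "moves R = {(t + a, t + b) | t a b. (a, b) \<in> R}"

lemma movesI: "(a, b) \<in> R \<Longrightarrow> (t + a, t + b) \<in> moves R"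
  unfolding moves_def by blast

lemma moves_rtrancl_add:
  "(x, y) \<in> (moves R)\<^sup>* \<Longrightarrow> (s + x, s + y) \<in> (moves (R :: 'm::ab_semigroup_add rel))\<^sup>*"
proof (induction rule: rtrancl_induct)
  case (step y z)
  then obtain t a b where "y = t + a" "z = t + b" "(a, b) \<in> R" unfolding moves_def by blast
  then have "(s + y, s + z) \<in> moves R" using movesI[of a b R "s + t"] by (simp add: add.assoc)
  with step.IH show ?case by simp
qed simp

lemma moves_rtrancl_invariant:
  assumes "(x, y) \<in> (moves R)\<^sup>*" and "\<And>t a b. (a, b) \<in> R \<Longrightarrow> f (t + a) = f (t + b)"
  shows "f x = f y"
  using assms(1) by induction (auto simp: moves_def assms(2))

lemma moves_rtrancl_keys:
  assumes "(x, y) \<in> (moves R)\<^sup>*" "keys x \<subseteq> V" and "\<And>a b. (a, b) \<in> R \<Longrightarrow> keys b \<subseteq> V"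
  shows "keys (y :: 'a \<Rightarrow>\<^sub>0 nat) \<subseteq> V"
  using assms(1,2)
proof induction
  case (step y z)
  then obtain t a b where "y = t + a" "z = t + b" "(a, b) \<in> R" unfolding moves_def by blast
  with step assms(3) show ?case by (auto simp: keys_add_nat)
qed

text \<open>The indicator of the connected component of x is a linear form vanishing on the ideal.\<close>

lemma moves_if_binomial_in_gen_ideal:
  fixes R :: "('v \<Rightarrow>\<^sub>0 nat) rel"
  assumes "(single x 1 - single y 1 :: ('v, 'k::comm_ring_1) mpoly) \<in> gen_ideal V (binomials R)"
  shows "(x, y) \<in> (moves (R \<union> R\<inverse>))\<^sup>*"
proof -
  define C where "C = {z. (x, z) \<in> (moves (R \<union> R\<inverse>))\<^sup>*}"
  have "(t + a \<in> C) = (t + b \<in> C)" if "(a, b) \<in> R" for t a b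
  proof -
    have "(t + a, t + b) \<in> moves (R \<union> R\<inverse>)" "(t + b, t + a) \<in> moves (R \<union> R\<inverse>)"
      using that by (auto intro: movesI)
    then show ?thesis unfolding C_def by (blast intro: rtrancl_into_rtrancl)
  qed
  then have "linear_extension (\<lambda>z. of_bool (z \<in> C) :: 'k) (single x 1 - single y 1) = 0"
    by (intro linear_extension_gen_ideal_binomials[OF _ assms]) simp
  then have "y \<in> C" by (simp add: linear_extension_diff C_def)
  then show ?thesis unfolding C_def by simp
qed

lemma binomial_in_gen_ideal_if_moves:
  fixes R :: "('v \<Rightarrow>\<^sub>0 nat) rel"
  assumes "(x, y) \<in> (moves (R \<union> R\<inverse>))\<^sup>*" "keys x \<subseteq> V"
    and "\<And>a b. (a, b) \<in> R \<Longrightarrow> keys a \<subseteq> V \<and> keys b \<subseteq> V"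
  shows "(single x 1 - single y 1 :: ('v, 'k::comm_ring_1) mpoly) \<in> gen_ideal V (binomials R)"
  using assms(1)
proof (induction rule: rtrancl_induct)
  case base
  show ?case by (simp add: gen_ideal_zero)
next
  case (step y z)
  then obtain t a b where yz: "y = t + a" "z = t + b" "(a, b) \<in> R \<or> (b, a) \<in> R"
    unfolding moves_def by blast
  have "keys y \<subseteq> V"
    using moves_rtrancl_keys[OF step.hyps(1) assms(2)] assms(3) by blast
  then have t: "single t 1 \<in> poly_ring V"
    using yz(1) by (intro poly_ring_single) (simp add: keys_add_nat)
  have "(single a 1 - single b 1 :: ('v, 'k) mpoly) \<in> gen_ideal V (binomials R)"
  proof (cases "(a, b) \<in> R")
    case True
    then show ?thesis by (auto intro: gen_ideal_generator simp: binomials_def)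
  next
    case False
    then have "(single b 1 - single a 1 :: ('v, 'k) mpoly) \<in> gen_ideal V (binomials R)"
      using yz(3) by (auto intro: gen_ideal_generator simp: binomials_def)
    from gen_ideal_uminus[OF this] show ?thesis by simp
  qed
  from gen_ideal_mult[OF this t]
  have "(single y 1 - single z 1 :: ('v, 'k) mpoly) \<in> gen_ideal V (binomials R)"
    by (simp add: yz right_diff_distrib mult_single)
  from gen_ideal_add[OF step.IH this] show ?case by simp
qed

section \<open>Toric ideals\<close>

lemma single_sum: "single k (sum f A) = (\<Sum>x\<in>A. single k (f x))"
  by (induction A rule: infinite_finite_induct) (simp_all add: single_add)

lemma binomial_in_toric_ideal:
  assumes "keys x \<subseteq> V" "keys y \<subseteq> V" "mono_image x = mono_image y"
  shows "(single x 1 - single y 1 :: ('a \<Rightarrow> nat, 'k::comm_ring_1) mpoly) \<in> toric_ideal V"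
  using assms unfolding toric_ideal_def
  by (auto intro!: poly_ring_diff poly_ring_single
      simp: toric_image_linear_extension linear_extension_diff)

lemma gen_ideal_subset_toric_ideal:
  assumes "\<And>a b. (a, b) \<in> R \<Longrightarrow> keys a \<subseteq> V \<and> keys b \<subseteq> V \<and> mono_image a = mono_image b"
  shows "gen_ideal V (binomials R) \<subseteq> (toric_ideal V :: ('a \<Rightarrow> nat, 'k::comm_ring_1) mpoly set)"
proof
  fix p :: "('a \<Rightarrow> nat, 'k) mpoly"
  assume p: "p \<in> gen_ideal V (binomials R)"
  have "(binomials R :: ('a \<Rightarrow> nat, 'k) mpoly set) \<subseteq> toric_ideal V"
    using assms by (fastforce simp: binomials_def intro!: binomial_in_toric_ideal)
  then have "p \<in> poly_ring V"
    using gen_ideal_subset_poly_ring[of "binomials R" V] p by (auto simp: toric_ideal_def)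
  moreover have "mono_image (t + a) = mono_image (t + b)" if "(a, b) \<in> R" for t a b
    using assms[OF that] by (simp add: mono_image_add)
  then have "toric_image p e = 0" for e
    unfolding toric_image_linear_extension
    by (intro linear_extension_gen_ideal_binomials[OF _ p]) simp
  ultimately show "p \<in> toric_ideal V" unfolding toric_ideal_def by auto
qed

text \<open>Inside each fiber of the toric map the coefficients of p sum to zero, so moving every
  coefficient onto a fixed representative of its fiber gives 0; the difference of p and this zero
  polynomial is a combination of binomials.\<close>

lemma toric_ideal_subset_gen_ideal:
  assumes "\<And>x y. keys x \<subseteq> V \<Longrightarrow> keys y \<subseteq> V \<Longrightarrow> mono_image x = mono_image y \<Longrightarrow>
      single x 1 - single y 1 \<in> gen_ideal V G"
  shows "(toric_ideal V :: ('a \<Rightarrow> nat, 'k::comm_ring_1) mpoly set) \<subseteq> gen_ideal V G"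
proof
  fix p :: "('a \<Rightarrow> nat, 'k) mpoly"
  assume "p \<in> toric_ideal V"
  then have V: "\<And>x. x \<in> keys p \<Longrightarrow> keys x \<subseteq> V" and fiber: "\<And>e. toric_image p e = 0"
    unfolding toric_ideal_def poly_ring_def mvars_def by auto
  define rep where "rep x = (SOME y. y \<in> keys p \<and> mono_image y = mono_image x)" for x
  have rep: "rep x \<in> keys p \<and> mono_image (rep x) = mono_image x" if "x \<in> keys p" for x
    unfolding rep_def by (rule someI[where x = x]) (simp add: that)
  have "(\<Sum>x\<in>keys p. single (rep x) (lookup p x)) =
      (\<Sum>e\<in>mono_image ` keys p. \<Sum>x\<in>{x \<in> keys p. mono_image x = e}. single (rep x) (lookup p x))"
    by (rule sum.group[symmetric]) auto
  also have "\<dots> = 0"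
  proof (rule sum.neutral, intro ballI)
    fix e assume "e \<in> mono_image ` keys p"
    then obtain x0 where x0: "x0 \<in> keys p" "e = mono_image x0" by blast
    have "rep x = rep x0" if "x \<in> keys p" "mono_image x = e" for x
      using that x0 unfolding rep_def by simp
    then have "(\<Sum>x\<in>{x \<in> keys p. mono_image x = e}. single (rep x) (lookup p x)) =
        single (rep x0) (toric_image p e)"
      by (simp add: toric_image_def single_sum[symmetric])
    then show "(\<Sum>x\<in>{x \<in> keys p. mono_image x = e}. single (rep x) (lookup p x)) = 0"
      by (simp add: fiber)
  qed
  finally have "p = (\<Sum>x\<in>keys p. single x (lookup p x) - single (rep x) (lookup p x))"
    by (simp add: sum_subtractf flip: poly_mapping_sum_single)
  also have "\<dots> = (\<Sum>x\<in>keys p. single 0 (lookup p x) * (single x 1 - single (rep x) 1))"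
    by (simp add: right_diff_distrib mult_single)
  also have "\<dots> \<in> gen_ideal V G"
    using V rep assms by (intro gen_ideal_sum gen_ideal_mult poly_ring_single) auto
  finally show "p \<in> gen_ideal V G" .
qed

section \<open>Double swaps\<close>

text \<open>move i j u is u + e_j - e_i when u i \<ge> 1; otherwise truncated subtraction leaves u i = 0.\<close>

definition move :: "'a \<Rightarrow> 'a \<Rightarrow> ('a \<Rightarrow> nat) \<Rightarrow> 'a \<Rightarrow> nat" where
  "move i j u = (\<lambda>x. if x = j then u x + 1 else if x = i then u x - 1 else u x)"

definition double_swap :: "('a \<Rightarrow> nat) set \<Rightarrow> (('a \<Rightarrow> nat) \<Rightarrow>\<^sub>0 nat) rel" where
  "double_swap V =
     {(single u1 1 + single u2 1, single (move i j u1) 1 + single (move j i u2) 1) | u1 u2 i j.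
        u1 \<in> V \<and> u2 \<in> V \<and> move i j u1 \<in> V \<and> move j i u2 \<in> V \<and> u2 i < u1 i \<and> u1 j < u2 j}"

definition fibers_connected :: "('a \<Rightarrow> nat) set \<Rightarrow> bool" where
  "fibers_connected V \<longleftrightarrow>
     (\<forall>x y. keys x \<subseteq> V \<longrightarrow> keys y \<subseteq> V \<longrightarrow> mono_image x = mono_image y \<longrightarrow>
        (x, y) \<in> (moves (double_swap V \<union> (double_swap V)\<inverse>))\<^sup>*)"

lemma double_swapI:
  "u1 \<in> V \<Longrightarrow> u2 \<in> V \<Longrightarrow> move i j u1 \<in> V \<Longrightarrow> move j i u2 \<in> V \<Longrightarrow> u2 i < u1 i \<Longrightarrow> u1 j < u2 j \<Longrightarrow>
    (single u1 1 + single u2 1, single (move i j u1) 1 + single (move j i u2) 1) \<in> double_swap V"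
  unfolding double_swap_def by blast

lemma double_swap_binomials_eq: "double_swap_binomials V = binomials (double_swap V)"
  unfolding double_swap_binomials_def binomials_def double_swap_def
  by (simp add: Yvar_def mult_single move_def, blast)

lemma move_add_indicator:
  "p \<noteq> q \<Longrightarrow> 1 \<le> u p \<Longrightarrow> move p q u x + of_bool (x = p) = u x + of_bool (x = q)"
  unfolding move_def by auto

lemma double_swap_keys: "(a, b) \<in> double_swap V \<Longrightarrow> keys a \<subseteq> V \<and> keys b \<subseteq> V"
  unfolding double_swap_def by (auto simp: keys_add_nat)

lemma double_swap_mono_image: "(a, b) \<in> double_swap V \<Longrightarrow> mono_image a = mono_image b"
proof -
  assume "(a, b) \<in> double_swap V"
  then obtain u1 u2 i j where ab: "a = single u1 1 + single u2 1"
      "b = single (move i j u1) 1 + single (move j i u2) 1" and "u2 i < u1 i" "u1 j < u2 j"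
    unfolding double_swap_def by blast
  then have "i \<noteq> j" "1 \<le> u1 i" "1 \<le> u2 j" by auto
  then have "move i j u1 x + move j i u2 x = u1 x + u2 x" for x
    using move_add_indicator[of i j u1 x] move_add_indicator[of j i u2 x] by simp
  then show ?thesis by (simp add: ab mono_image_add)
qed

lemma moves_double_swap_keys:
  "(x, y) \<in> (moves (double_swap V))\<^sup>* \<Longrightarrow> keys x \<subseteq> V \<Longrightarrow> keys y \<subseteq> V"
  using moves_rtrancl_keys double_swap_keys by metis

lemma moves_double_swap_mono_image:
  "(x, y) \<in> (moves (double_swap V))\<^sup>* \<Longrightarrow> mono_image x = mono_image y"
  by (erule moves_rtrancl_invariant) (simp add: mono_image_add double_swap_mono_image)

theorem white_property_iff_fibers_connected:
  "white_property TYPE('k::field) V \<longleftrightarrow> fibers_connected V"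
proof
  assume "white_property TYPE('k) V"
  then have toric:
      "(toric_ideal V :: ('a \<Rightarrow> nat, 'k) mpoly set) = gen_ideal V (binomials (double_swap V))"
    by (simp add: white_property_def double_swap_binomials_eq)
  show "fibers_connected V"
    unfolding fibers_connected_def
  proof (intro allI impI)
    fix x y :: "('a \<Rightarrow> nat) \<Rightarrow>\<^sub>0 nat"
    assume "keys x \<subseteq> V" "keys y \<subseteq> V" "mono_image x = mono_image y"
    then have "(single x 1 - single y 1 :: ('a \<Rightarrow> nat, 'k) mpoly)
        \<in> gen_ideal V (binomials (double_swap V))"
      using binomial_in_toric_ideal toric by blast
    then show "(x, y) \<in> (moves (double_swap V \<union> (double_swap V)\<inverse>))\<^sup>*"
      by (rule moves_if_binomial_in_gen_ideal)
  qed
next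
  assume "fibers_connected V"
  then have "(toric_ideal V :: ('a \<Rightarrow> nat, 'k) mpoly set) \<subseteq> gen_ideal V (binomials (double_swap V))"
    unfolding fibers_connected_def
    by (intro toric_ideal_subset_gen_ideal binomial_in_gen_ideal_if_moves)
       (auto dest: double_swap_keys)
  moreover have
    "gen_ideal V (binomials (double_swap V)) \<subseteq> (toric_ideal V :: ('a \<Rightarrow> nat, 'k) mpoly set)"
    by (intro gen_ideal_subset_toric_ideal) (simp add: double_swap_keys double_swap_mono_image)
  ultimately show "white_property TYPE('k) V"
    by (simp add: white_property_def double_swap_binomials_eq)
qed

definition zero_one :: "('a \<Rightarrow> nat) set \<Rightarrow> bool" where
  "zero_one V \<longleftrightarrow> (\<forall>u\<in>V. \<forall>x. u x \<le> 1)"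

lemma matroid_bases_zero_one: "matroid_bases E B \<Longrightarrow> zero_one B"
  unfolding matroid_bases_def zero_one_def by (metis le_eq_less_or_eq zero_less_one)

lemma double_swap_reverse:
  assumes "zero_one V" "(a, b) \<in> double_swap V"
  shows "(b, a) \<in> double_swap V"
proof -
  obtain u1 u2 i j where ab: "a = single u1 1 + single u2 1"
      "b = single (move i j u1) 1 + single (move j i u2) 1"
    and V: "u1 \<in> V" "u2 \<in> V" "move i j u1 \<in> V" "move j i u2 \<in> V"
    and "u2 i < u1 i" "u1 j < u2 j"
    using assms(2) unfolding double_swap_def by blast
  moreover have "u1 i \<le> 1" "u2 j \<le> 1" using assms(1) V unfolding zero_one_def by auto
  ultimately have "u1 i = 1" "u2 i = 0" "u1 j = 0" "u2 j = 1" "i \<noteq> j" by auto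
  then have undo: "move j i (move i j u1) = u1" "move i j (move j i u2) = u2"
    and "move j i u2 j < move i j u1 j" "move i j u1 i < move j i u2 i"
    by (auto simp: move_def fun_eq_iff)
  then have "(b, single (move j i (move i j u1)) 1 + single (move i j (move j i u2)) 1)
      \<in> double_swap V"
    unfolding ab by (intro double_swapI) (simp_all add: V undo)
  then show ?thesis by (simp add: ab undo)
qed

lemma fibers_connected_zero_one:
  assumes "zero_one V"
  shows "fibers_connected V \<longleftrightarrow>
    (\<forall>x y. keys x \<subseteq> V \<longrightarrow> keys y \<subseteq> V \<longrightarrow> mono_image x = mono_image y \<longrightarrow>
       (x, y) \<in> (moves (double_swap V))\<^sup>*)"
proof -
  have "double_swap V \<union> (double_swap V)\<inverse> = double_swap V"
    using double_swap_reverse[OF assms] by blast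
  then show ?thesis unfolding fibers_connected_def by simp
qed

section \<open>The bases of P^alpha\<close>

lemma alpha_ground_iff: "(i, c) \<in> alpha_ground n k \<longleftrightarrow> i < n \<and> c \<in> {1..k i}"
  unfolding alpha_ground_def by auto

lemma finite_alpha_ground: "finite (alpha_ground n k)"
proof (rule finite_subset)
  show "alpha_ground n k \<subseteq> (SIGMA i:{..<n}. {1..k i})" unfolding alpha_ground_def by auto
qed auto

lemma alpha_bases_outside_ground: "w \<in> alpha_bases n k B \<Longrightarrow> x \<notin> alpha_ground n k \<Longrightarrow> w x = 0"
  unfolding alpha_bases_def by (cases x) auto

lemma alpha_bases_pi0: "w \<in> alpha_bases n k B \<Longrightarrow> pi0 k w \<in> B"
  unfolding alpha_bases_def by auto

lemma pi0_add: "pi0 k (\<lambda>x. f x + g x) = (\<lambda>i. pi0 k f i + pi0 k g i)"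
  unfolding pi0_def by (simp add: sum.distrib)

lemma pi0_indicator:
  "(i, c) \<in> alpha_ground n k \<Longrightarrow> pi0 k (\<lambda>x. of_bool (x = (i, c))) r = of_bool (r = i)"
  unfolding pi0_def by (auto simp: alpha_ground_iff of_bool_def)

lemma pi0_nonzero_entry: "pi0 k w i \<noteq> 0 \<Longrightarrow> \<exists>c. w (i, c) \<noteq> 0"
  unfolding pi0_def by (meson sum.neutral)

lemma alpha_bases_entry_le_pi0:
  assumes "w \<in> alpha_bases n k B"
  shows "w (i, c) \<le> pi0 k w i"
proof (cases "(i, c) \<in> alpha_ground n k")
  case True
  then show ?thesis unfolding pi0_def by (intro member_le_sum) (auto simp: alpha_ground_iff)
qed (simp add: alpha_bases_outside_ground[OF assms])

lemma zero_one_alpha_bases: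
  assumes "zero_one B"
  shows "zero_one (alpha_bases n k B)"
  unfolding zero_one_def
proof (intro ballI allI)
  fix w and x :: "nat \<times> nat"
  assume w: "w \<in> alpha_bases n k B"
  obtain i c where "x = (i, c)" by fastforce
  then have "w x \<le> pi0 k w i" using alpha_bases_entry_le_pi0[OF w] by simp
  also have "\<dots> \<le> 1" using assms alpha_bases_pi0[OF w] unfolding zero_one_def by blast
  finally show "w x \<le> 1" .
qed

lemma alpha_bases_row:
  assumes "zero_one B" "w \<in> alpha_bases n k B" "w (i, a) \<noteq> 0"
  shows "w (i, c) = of_bool (c = a)"
proof -
  have pi0: "pi0 k w i \<le> 1"
    using assms(1) alpha_bases_pi0[OF assms(2)] unfolding zero_one_def by blast
  have a: "(i, a) \<in> alpha_ground n k"
    using assms(3) alpha_bases_outside_ground[OF assms(2), of "(i, a)"] by auto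
  show ?thesis
  proof (cases "c = a")
    case True
    then show ?thesis using assms(3) alpha_bases_entry_le_pi0[OF assms(2), of i a] pi0 by simp
  next
    case False
    show ?thesis
    proof (rule ccontr)
      assume "w (i, c) \<noteq> of_bool (c = a)"
      then have "w (i, c) \<noteq> 0" using False by simp
      then have "(i, c) \<in> alpha_ground n k"
        using alpha_bases_outside_ground[OF assms(2), of "(i, c)"] by auto
      have "w (i, a) + w (i, c) = (\<Sum>j\<in>{a, c}. w (i, j))" using False by simp
      also have "\<dots> \<le> pi0 k w i"
        unfolding pi0_def using a \<open>(i, c) \<in> alpha_ground n k\<close>
        by (intro sum_mono2) (auto simp: alpha_ground_iff)
      finally show False using pi0 assms(3) \<open>w (i, c) \<noteq> 0\<close> by simp
    qed
  qed
qed

lemma alpha_bases_row_entry: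
  assumes "zero_one B" "w \<in> alpha_bases n k B" "pi0 k w i \<noteq> 0"
  obtains c where "(i, c) \<in> alpha_ground n k" "w (i, c) = 1"
proof -
  obtain c where c: "w (i, c) \<noteq> 0" using pi0_nonzero_entry[OF assms(3)] by blast
  then have "(i, c) \<in> alpha_ground n k"
    using alpha_bases_outside_ground[OF assms(2), of "(i, c)"] by auto
  moreover have "w (i, c) = 1" using alpha_bases_row[OF assms(1,2) c, of c] by simp
  ultimately show ?thesis by (rule that)
qed

lemma pi0_move:
  assumes "p \<in> alpha_ground n k" "q \<in> alpha_ground n k" "p \<noteq> q" "1 \<le> w p"
  shows "pi0 k (move p q w) r + of_bool (r = fst p) = pi0 k w r + of_bool (r = fst q)"
proof -
  have "(\<lambda>x. move p q w x + of_bool (x = p)) = (\<lambda>x. w x + of_bool (x = q))"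
    using move_add_indicator[where u = w, OF assms(3,4)] by blast
  then have "pi0 k (\<lambda>x. move p q w x + of_bool (x = p)) r = pi0 k (\<lambda>x. w x + of_bool (x = q)) r"
    by simp
  then show ?thesis
    using pi0_indicator[of "fst p" "snd p"] pi0_indicator[of "fst q" "snd q"] assms(1,2)
    by (simp add: pi0_add)
qed

lemma pi0_move_same_row:
  assumes "p \<in> alpha_ground n k" "q \<in> alpha_ground n k" "p \<noteq> q" "1 \<le> w p" "fst p = fst q"
  shows "pi0 k (move p q w) = pi0 k w"
proof
  fix r
  show "pi0 k (move p q w) r = pi0 k w r"
    using pi0_move[where w = w and r = r, OF assms(1-4)] assms(5) by simp
qed

lemma pi0_move_other_row:
  assumes "p \<in> alpha_ground n k" "q \<in> alpha_ground n k" "1 \<le> w p" "fst p \<noteq> fst q"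
  shows "pi0 k (move p q w) = move (fst p) (fst q) (pi0 k w)"
proof
  fix r
  have "p \<noteq> q" using assms(4) by auto
  from pi0_move[where w = w and r = r, OF assms(1,2) this assms(3)] assms(4)
  show "pi0 k (move p q w) r = move (fst p) (fst q) (pi0 k w) r"
    unfolding move_def by (auto split: if_splits)
qed

lemma move_in_alpha_bases:
  assumes "w \<in> alpha_bases n k B" "p \<in> alpha_ground n k" "q \<in> alpha_ground n k"
    and "pi0 k (move p q w) \<in> B"
  shows "move p q w \<in> alpha_bases n k B"
  using assms alpha_bases_outside_ground[OF assms(1)] unfolding alpha_bases_def move_def by auto

lemma alpha_double_swap:
  assumes "w \<in> alpha_bases n k B" "z \<in> alpha_bases n k B"
    and "p \<in> alpha_ground n k" "q \<in> alpha_ground n k" "z p < w p" "w q < z q"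
    and "pi0 k (move p q w) \<in> B" "pi0 k (move q p z) \<in> B"
  shows "(single w 1 + single z 1, single (move p q w) 1 + single (move q p z) 1)
    \<in> double_swap (alpha_bases n k B)"
  using assms by (intro double_swapI move_in_alpha_bases)

lemma mono_image_push_pi0: "mono_image (push_monomial (pi0 k) m) = pi0 k (mono_image m)"
proof (induction m rule: monomial_induct)
  case zero
  show ?case by (simp add: pi0_def fun_eq_iff)
next
  case (add_var m w)
  then show ?case by (simp add: push_monomial_add mono_image_add pi0_add)
qed

section \<open>Lifting double swaps to P^alpha\<close>

lemma double_swap_lift:
  assumes "zero_one B" "keys m \<subseteq> alpha_bases n k B"
    and "(push_monomial (pi0 k) m, \<mu>) \<in> moves (double_swap B)"
  shows "\<exists>m'. (m, m') \<in> moves (double_swap (alpha_bases n k B)) \<and> push_monomial (pi0 k) m' = \<mu>"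
proof -
  obtain t u1 u2 i j where push: "push_monomial (pi0 k) m = (t + single u2 1) + single u1 1"
      and \<mu>: "\<mu> = t + (single (move i j u1) 1 + single (move j i u2) 1)"
      and B: "u1 \<in> B" "u2 \<in> B" "move i j u1 \<in> B" "move j i u2 \<in> B"
      and "u2 i < u1 i" "u1 j < u2 j"
    using assms(3) unfolding moves_def double_swap_def by (auto simp: ac_simps)
  moreover have "u1 i \<le> 1" "u2 j \<le> 1" using assms(1) B unfolding zero_one_def by auto
  ultimately have u: "u1 i = 1" "u2 i = 0" "u1 j = 0" "u2 j = 1" "i \<noteq> j" by auto
  obtain w1 m1 where m: "m = m1 + single w1 1" and w1: "pi0 k w1 = u1"
      and push1: "push_monomial (pi0 k) m1 = t + single u2 1"
    using push by (rule push_monomial_eq_add_single)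
  obtain w2 m0 where m1: "m1 = m0 + single w2 1" and w2: "pi0 k w2 = u2"
      and push0: "push_monomial (pi0 k) m0 = t"
    using push1 by (rule push_monomial_eq_add_single)
  have \<alpha>: "w1 \<in> alpha_bases n k B" "w2 \<in> alpha_bases n k B"
    using assms(2) m m1 by (auto simp: keys_add_nat)
  have "pi0 k w1 i \<noteq> 0" "pi0 k w2 j \<noteq> 0" using w1 w2 u by auto
  obtain c where c: "(i, c) \<in> alpha_ground n k" "w1 (i, c) = 1"
    by (rule alpha_bases_row_entry[OF assms(1) \<alpha>(1) \<open>pi0 k w1 i \<noteq> 0\<close>])
  obtain d where d: "(j, d) \<in> alpha_ground n k" "w2 (j, d) = 1"
    by (rule alpha_bases_row_entry[OF assms(1) \<alpha>(2) \<open>pi0 k w2 j \<noteq> 0\<close>])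
  have "w2 (i, c) = 0" "w1 (j, d) = 0"
    using alpha_bases_entry_le_pi0[OF \<alpha>(2), of i c] alpha_bases_entry_le_pi0[OF \<alpha>(1), of j d]
      w1 w2 u
    by auto
  define w1' where "w1' = move (i, c) (j, d) w1"
  define w2' where "w2' = move (j, d) (i, c) w2"
  have pi0_w': "pi0 k w1' = move i j u1" "pi0 k w2' = move j i u2"
    unfolding w1'_def w2'_def using c d u w1 w2 pi0_move_other_row[of _ n k] by auto
  have "(single w1 1 + single w2 1, single w1' 1 + single w2' 1) \<in> double_swap (alpha_bases n k B)"
    unfolding w1'_def w2'_def using c d \<alpha> B pi0_w' \<open>w2 (i, c) = 0\<close> \<open>w1 (j, d) = 0\<close>
    by (intro alpha_double_swap) (auto simp: w1'_def w2'_def)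
  then have "(m, m0 + (single w1' 1 + single w2' 1)) \<in> moves (double_swap (alpha_bases n k B))"
    using movesI by (fastforce simp: m m1 ac_simps)
  then show ?thesis
    by (intro exI[of _ "m0 + (single w1' 1 + single w2' 1)"])
       (simp add: push_monomial_add push0 pi0_w' \<mu>)
qed

lemma double_swap_lift_rtrancl:
  assumes "zero_one B" "keys m \<subseteq> alpha_bases n k B"
    and "(push_monomial (pi0 k) m, \<mu>) \<in> (moves (double_swap B))\<^sup>*"
  shows "\<exists>m'. (m, m') \<in> (moves (double_swap (alpha_bases n k B)))\<^sup>* \<and> push_monomial (pi0 k) m' = \<mu>"
  using assms(3)
proof (induction rule: rtrancl_induct)
  case (step \<mu> \<mu>')
  then obtain m' where m': "(m, m') \<in> (moves (double_swap (alpha_bases n k B)))\<^sup>*"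
      "push_monomial (pi0 k) m' = \<mu>"
    by blast
  have "keys m' \<subseteq> alpha_bases n k B"
    using moves_double_swap_keys[OF m'(1) assms(2)] .
  then obtain m'' where "(m', m'') \<in> moves (double_swap (alpha_bases n k B))"
      "push_monomial (pi0 k) m'' = \<mu>'"
    using double_swap_lift[OF assms(1)] m'(2) step.hyps(2) by blast
  with m'(1) show ?case by (blast intro: rtrancl_into_rtrancl)
qed auto

section \<open>Connectivity of the fibers of pi0\<close>

text \<open>In a row i where w and wt differ, w and wt have their units in different columns b and a;
  the factor z of m supplying wt's unit at (i, a) trades it against w's unit at (i, b).\<close>

lemma alpha_fiber_step:
  assumes "zero_one B" "keys m \<subseteq> alpha_bases n k B" "w \<in> keys m" "wt \<in> alpha_bases n k B"
    and "pi0 k w = pi0 k wt" "w \<noteq> wt" "\<And>x. wt x \<le> mono_image m x"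
  shows "\<exists>m' w'. (m, m') \<in> moves (double_swap (alpha_bases n k B)) \<and>
    push_monomial (pi0 k) m' = push_monomial (pi0 k) m \<and> w' \<in> keys m' \<and> pi0 k w' = pi0 k wt \<and>
    {x. w' x \<noteq> wt x} \<subset> {x. w x \<noteq> wt x}"
proof -
  have w: "w \<in> alpha_bases n k B" using assms(2,3) by blast
  obtain i c0 where c0: "w (i, c0) \<noteq> wt (i, c0)" using assms(6) by (auto simp: fun_eq_iff)
  have "pi0 k w i \<noteq> 0"
    using c0 alpha_bases_entry_le_pi0[OF w, of i c0] alpha_bases_entry_le_pi0[OF assms(4), of i c0]
      assms(5)
    by auto
  moreover have "pi0 k wt i \<noteq> 0" using calculation assms(5) by simp
  ultimately obtain b a where b: "(i, b) \<in> alpha_ground n k" "w (i, b) = 1"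
      and a: "(i, a) \<in> alpha_ground n k" "wt (i, a) = 1"
    using alpha_bases_row_entry[OF assms(1) w] alpha_bases_row_entry[OF assms(1) assms(4)] by metis
  have w_row: "w (i, c) = of_bool (c = b)" and wt_row: "wt (i, c) = of_bool (c = a)" for c
    using alpha_bases_row[OF assms(1) w, of i b] alpha_bases_row[OF assms(1) assms(4), of i a] a b
    by auto
  have "a \<noteq> b" using c0 by (auto simp: w_row wt_row)
  obtain z where z: "z \<in> keys m" "z (i, a) \<noteq> 0"
    using mono_image_nonzero[of m "(i, a)"] assms(7)[of "(i, a)"] a by fastforce
  have z\<alpha>: "z \<in> alpha_bases n k B" using assms(2) z(1) by blast
  have z_row: "z (i, c) = of_bool (c = a)" for c using alpha_bases_row[OF assms(1) z\<alpha> z(2)] .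
  obtain m1 where m1: "m = m1 + single w 1" using assms(3) by (rule monomial_split)
  have "z \<noteq> w" using z(2) w_row \<open>a \<noteq> b\<close> by auto
  then have "z \<in> keys m1" using z(1) m1 by (auto simp: keys_add_nat)
  then obtain m0 where m0: "m1 = m0 + single z 1" by (rule monomial_split)
  define w' where "w' = move (i, b) (i, a) w"
  define z' where "z' = move (i, a) (i, b) z"
  have pi0_w': "pi0 k w' = pi0 k w" and pi0_z': "pi0 k z' = pi0 k z"
    unfolding w'_def z'_def using a b \<open>a \<noteq> b\<close>
    by (auto intro!: pi0_move_same_row simp: w_row z_row)
  have "(single w 1 + single z 1, single w' 1 + single z' 1) \<in> double_swap (alpha_bases n k B)"
    unfolding w'_def z'_def using a b \<open>a \<noteq> b\<close> w z\<alpha> pi0_w' pi0_z' alpha_bases_pi0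
    by (intro alpha_double_swap) (auto simp: w_row z_row w'_def z'_def)
  then have "(m, m0 + (single w' 1 + single z' 1)) \<in> moves (double_swap (alpha_bases n k B))"
    using movesI by (fastforce simp: m1 m0 ac_simps)
  moreover have "push_monomial (pi0 k) (m0 + (single w' 1 + single z' 1)) = push_monomial (pi0 k) m"
    by (simp add: m1 m0 push_monomial_add pi0_w' pi0_z' ac_simps)
  moreover have "{x. w' x \<noteq> wt x} \<subset> {x. w x \<noteq> wt x}"
  proof -
    have "{x. w' x \<noteq> wt x} \<subseteq> {x. w x \<noteq> wt x} - {(i, b)}"
      using \<open>a \<noteq> b\<close> by (auto simp: w'_def move_def w_row wt_row)
    moreover have "(i, b) \<in> {x. w x \<noteq> wt x}" using \<open>a \<noteq> b\<close> by (simp add: w_row wt_row)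
    ultimately show ?thesis by blast
  qed
  ultimately show ?thesis
    using pi0_w' assms(5)
    by (intro exI[of _ "m0 + (single w' 1 + single z' 1)"] exI[of _ w']) (simp add: keys_add_nat)
qed

lemma alpha_fiber_align:
  assumes "zero_one B" "wt \<in> alpha_bases n k B"
  shows "keys m \<subseteq> alpha_bases n k B \<Longrightarrow> w \<in> keys m \<Longrightarrow> pi0 k w = pi0 k wt \<Longrightarrow>
    (\<And>x. wt x \<le> mono_image m x) \<Longrightarrow>
    \<exists>m'. (m, m') \<in> (moves (double_swap (alpha_bases n k B)))\<^sup>* \<and>
      push_monomial (pi0 k) m' = push_monomial (pi0 k) m \<and> wt \<in> keys m'"
proof (induction "card {x. w x \<noteq> wt x}" arbitrary: m w rule: less_induct)
  case less
  show ?case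
  proof (cases "w = wt")
    case False
    then obtain m1 w1 where step: "(m, m1) \<in> moves (double_swap (alpha_bases n k B))"
        "push_monomial (pi0 k) m1 = push_monomial (pi0 k) m" "w1 \<in> keys m1" "pi0 k w1 = pi0 k wt"
        "{x. w1 x \<noteq> wt x} \<subset> {x. w x \<noteq> wt x}"
      using alpha_fiber_step[OF assms(1) less.prems(1,2) assms(2) less.prems(3) _ less.prems(4)]
      by blast
    have w: "w \<in> alpha_bases n k B" using less.prems(1,2) by blast
    have "{x. w x \<noteq> wt x} \<subseteq> alpha_ground n k"
      using alpha_bases_outside_ground[OF w] alpha_bases_outside_ground[OF assms(2)] by force
    then have card: "card {x. w1 x \<noteq> wt x} < card {x. w x \<noteq> wt x}"
      using step(5) finite_alpha_ground by (meson psubset_card_mono rev_finite_subset)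
    have keys: "keys m1 \<subseteq> alpha_bases n k B"
      using moves_double_swap_keys[OF r_into_rtrancl[OF step(1)] less.prems(1)] .
    have "mono_image m1 = mono_image m"
      using moves_double_swap_mono_image[OF r_into_rtrancl[OF step(1)]] by simp
    then have "wt x \<le> mono_image m1 x" for x using less.prems(4) by simp
    from less.hyps[OF card keys step(3,4) this]
    obtain m' where "(m1, m') \<in> (moves (double_swap (alpha_bases n k B)))\<^sup>*"
        "push_monomial (pi0 k) m' = push_monomial (pi0 k) m1" "wt \<in> keys m'"
      by blast
    with step(1,2) show ?thesis by (metis converse_rtrancl_into_rtrancl)
  qed (use less.prems in blast)
qed

lemma alpha_fiber_connected:
  assumes "zero_one B"
  shows "keys m \<subseteq> alpha_bases n k B \<Longrightarrow> keys m2 \<subseteq> alpha_bases n k B \<Longrightarrow>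
    push_monomial (pi0 k) m = push_monomial (pi0 k) m2 \<Longrightarrow> mono_image m = mono_image m2 \<Longrightarrow>
    (m, m2) \<in> (moves (double_swap (alpha_bases n k B)))\<^sup>*"
proof (induction m2 arbitrary: m rule: monomial_induct)
  case zero
  then have "m = 0" using keys_push_monomial[of "pi0 k" m] by simp
  then show ?case by simp
next
  case (add_var m2 wt)
  have wt: "wt \<in> alpha_bases n k B" and m2: "keys m2 \<subseteq> alpha_bases n k B"
    using add_var.prems(2) by (auto simp: keys_add_nat)
  have "push_monomial (pi0 k) m = push_monomial (pi0 k) m2 + single (pi0 k wt) 1"
    using add_var.prems(3) by (simp add: push_monomial_add)
  then obtain w m1 where "m = m1 + single w 1" "pi0 k w = pi0 k wt"
    by (rule push_monomial_eq_add_single)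
  moreover have "wt x \<le> mono_image m x" for x
    using add_var.prems(4) by (simp add: mono_image_add)
  ultimately obtain m' where m': "(m, m') \<in> (moves (double_swap (alpha_bases n k B)))\<^sup>*"
      "push_monomial (pi0 k) m' = push_monomial (pi0 k) m" "wt \<in> keys m'"
    using alpha_fiber_align[OF assms wt add_var.prems(1)] by (fastforce simp: keys_add_nat)
  obtain m3 where m3: "m' = m3 + single wt 1" using m'(3) by (rule monomial_split)
  have "keys m3 \<subseteq> alpha_bases n k B"
    using moves_double_swap_keys[OF m'(1) add_var.prems(1)] m3 by (simp add: keys_add_nat)
  moreover have "push_monomial (pi0 k) m3 = push_monomial (pi0 k) m2"
    using m'(2) add_var.prems(3) m3 by (simp add: push_monomial_add)
  moreover have "mono_image m3 = mono_image m2"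
    using moves_double_swap_mono_image[OF m'(1)] add_var.prems(4) m3
    by (simp add: mono_image_add fun_eq_iff)
  ultimately have "(m3, m2) \<in> (moves (double_swap (alpha_bases n k B)))\<^sup>*"
    using add_var.IH m2 by blast
  then have "(m', m2 + single wt 1) \<in> (moves (double_swap (alpha_bases n k B)))\<^sup>*"
    using moves_rtrancl_add[of m3 m2 _ "single wt 1"] by (simp add: m3 add.commute)
  with m'(1) show ?case by simp
qed

theorem fibers_connected_alpha_bases:
  assumes "zero_one B" "fibers_connected B"
  shows "fibers_connected (alpha_bases n k B)"
  unfolding fibers_connected_zero_one[OF zero_one_alpha_bases[OF assms(1)]]
proof (intro allI impI)
  fix m1 m2
  assume m: "keys m1 \<subseteq> alpha_bases n k B" "keys m2 \<subseteq> alpha_bases n k B"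
    "mono_image m1 = mono_image m2"
  have "keys (push_monomial (pi0 k) m) \<subseteq> B" if "keys m \<subseteq> alpha_bases n k B" for m
    using that alpha_bases_pi0 by (auto simp: keys_push_monomial)
  then have "(push_monomial (pi0 k) m1, push_monomial (pi0 k) m2) \<in> (moves (double_swap B))\<^sup>*"
    using assms m by (simp add: fibers_connected_zero_one mono_image_push_pi0)
  then obtain m' where m': "(m1, m') \<in> (moves (double_swap (alpha_bases n k B)))\<^sup>*"
      "push_monomial (pi0 k) m' = push_monomial (pi0 k) m2"
    using double_swap_lift_rtrancl[OF assms(1) m(1)] by blast
  have "keys m' \<subseteq> alpha_bases n k B"
    using moves_double_swap_keys[OF m'(1) m(1)] .
  moreover have "mono_image m' = mono_image m2"
    using moves_double_swap_mono_image[OF m'(1)] m(3) by simp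
  ultimately have "(m', m2) \<in> (moves (double_swap (alpha_bases n k B)))\<^sup>*"
    using alpha_fiber_connected[OF assms(1) _ m(2) m'(2)] by blast
  with m'(1) show "(m1, m2) \<in> (moves (double_swap (alpha_bases n k B)))\<^sup>*" by simp
qed

theorem corollary2p5:
  fixes n :: nat and k :: "nat \<Rightarrow> nat" and B :: "(nat \<Rightarrow> nat) set"
  assumes "\<forall>i<n. k i \<ge> 1"
    and "matroid_bases {0..<n} B"
    and "white_property TYPE('k::field) B"
  shows "white_property TYPE('k) (alpha_bases n k B)"
proof -
  have "zero_one B" using assms(2) by (rule matroid_bases_zero_one)
  moreover have "fibers_connected B"
    using assms(3) by (simp add: white_property_iff_fibers_connected)
  ultimately have "fibers_connected (alpha_bases n k B)" by (rule fibers_connected_alpha_bases)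
  then show ?thesis by (simp add: white_property_iff_fibers_connected)
qed

end
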